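(* Let $F,E$ be Archimedean vector lattices and $T:F\to E$ a lattice homomorphism. The following are equivalent: (i) $T$ maps nets decreasing to $0_{F}$ into nets decreasing to $0_{E}$; (ii) $T$ preserves suprema and infima of arbitrary sets (if $G\subset F$ and $g=\bigvee G$, then $Tg=\bigvee TG$, and similarly for infima); (iii) $T$ is order continuous; (iv) there is an ideal $H\subset F$ such that $T|_{H}$ is order continuous (with respect to the order convergence of $H$) and $TF\subset (TH)^{dd}$; (v) $T$ is uo-continuous.
   Context: A lattice homomorphism is a linear map with $T|f|=|Tf|$ for all $f$. A net $(f_\alpha)$ order converges to $f$ ($f_\alpha\xrightarrow{o}f$) if there is $G$ with $\bigwedge G=0$ such that for every $g\in G$ there is $\alpha_0$ with $|f_\alpha-f|\le g$ for $\alpha\ge\alpha_0$. A net uo-converges to $f$ if $|f_\alpha-f|\wedge g\xrightarrow{o}0$ for every $g\ge 0$. An operator is order continuous (uo-continuous) if it maps order (uo) convergent nets to order (uo) convergent nets with the image of the limit as limit. For $G\subset E$, $G^d=\{e\in E: |e|\wedge|g|=0\ \forall g\in G\}$ and $G^{dd}=(G^d)^d$ is the band generated by $G$. *)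

theory Defs
  imports Complex_Main "HOL-Library.Lattice_Algebras"
begin

class vector_lattice = ordered_real_vector + lattice_ab_group_add_abs

class archimedean_vector_lattice = vector_lattice +
  assumes archimedean: "0 \<le> x \<Longrightarrow> (\<forall>n::nat. real n *\<^sub>R x \<le> y) \<Longrightarrow> x = 0"

definition is_inf_on :: "'a::order set \<Rightarrow> 'a set \<Rightarrow> 'a \<Rightarrow> bool" where
  "is_inf_on A S x \<longleftrightarrow> x \<in> A \<and> (\<forall>s\<in>S. x \<le> s) \<and> (\<forall>y\<in>A. (\<forall>s\<in>S. y \<le> s) \<longrightarrow> y \<le> x)"

definition is_sup_on :: "'a::order set \<Rightarrow> 'a set \<Rightarrow> 'a \<Rightarrow> bool" where
  "is_sup_on A S x \<longleftrightarrow> x \<in> A \<and> (\<forall>s\<in>S. s \<le> x) \<and> (\<forall>y\<in>A. (\<forall>s\<in>S. s \<le> y) \<longrightarrow> x \<le> y)"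

abbreviation is_inf :: "'a::order set \<Rightarrow> 'a \<Rightarrow> bool" where "is_inf \<equiv> is_inf_on UNIV"
abbreviation is_sup :: "'a::order set \<Rightarrow> 'a \<Rightarrow> bool" where "is_sup \<equiv> is_sup_on UNIV"

definition down_directed :: "'a::order set \<Rightarrow> bool" where
  "down_directed D \<longleftrightarrow> (\<forall>x\<in>D. \<forall>y\<in>D. \<exists>z\<in>D. z \<le> x \<and> z \<le> y)"

text \<open>Nets are represented by filters on the space: a net (f_\<alpha>) corresponds to the
  filter generated by its tails {f_\<beta> | \<beta> \<ge> \<alpha>}; every proper filter arises this way.\<close>
definition oconv_on :: "'a::vector_lattice set \<Rightarrow> 'a filter \<Rightarrow> 'a \<Rightarrow> bool" where
  "oconv_on A \<F> f \<longleftrightarrow>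
     (\<exists>G. G \<subseteq> A \<and> is_inf_on A G 0 \<and> (\<forall>g\<in>G. \<forall>\<^sub>F x in \<F>. \<bar>x - f\<bar> \<le> g))"

abbreviation oconv :: "'a::vector_lattice filter \<Rightarrow> 'a \<Rightarrow> bool" where
  "oconv \<equiv> oconv_on UNIV"

definition uoconv :: "'a::vector_lattice filter \<Rightarrow> 'a \<Rightarrow> bool" where
  "uoconv \<F> f \<longleftrightarrow> (\<forall>g. 0 \<le> g \<longrightarrow> oconv (filtermap (\<lambda>x. inf \<bar>x - f\<bar> g) \<F>) 0)"

definition lattice_hom :: "('a::vector_lattice \<Rightarrow> 'b::vector_lattice) \<Rightarrow> bool" where
  "lattice_hom T \<longleftrightarrow> linear T \<and> (\<forall>f. T \<bar>f\<bar> = \<bar>T f\<bar>)"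

definition order_continuous_on ::
  "'a::vector_lattice set \<Rightarrow> ('a \<Rightarrow> 'b::vector_lattice) \<Rightarrow> bool" where
  "order_continuous_on A T \<longleftrightarrow>
     (\<forall>\<F> f. \<F> \<noteq> bot \<and> eventually (\<lambda>x. x \<in> A) \<F> \<and> f \<in> A \<and> oconv_on A \<F> f
        \<longrightarrow> oconv (filtermap T \<F>) (T f))"

abbreviation order_continuous where "order_continuous \<equiv> order_continuous_on UNIV"

definition uo_continuous :: "('a::vector_lattice \<Rightarrow> 'b::vector_lattice) \<Rightarrow> bool" where
  "uo_continuous T \<longleftrightarrow>
     (\<forall>\<F> f. \<F> \<noteq> bot \<and> uoconv \<F> f \<longrightarrow> uoconv (filtermap T \<F>) (T f))"

definition vl_ideal :: "'a::vector_lattice set \<Rightarrow> bool" where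
  "vl_ideal H \<longleftrightarrow> 0 \<in> H \<and> (\<forall>x\<in>H. \<forall>y\<in>H. x + y \<in> H) \<and> (\<forall>c. \<forall>x\<in>H. c *\<^sub>R x \<in> H)
     \<and> (\<forall>x y. y \<in> H \<and> \<bar>x\<bar> \<le> \<bar>y\<bar> \<longrightarrow> x \<in> H)"

definition disj_compl :: "'a::vector_lattice set \<Rightarrow> 'a set" where
  "disj_compl G = {e. \<forall>g\<in>G. inf \<bar>e\<bar> \<bar>g\<bar> = 0}"

end

theory Submission
  imports Defs
begin

text \<open>Everything is compared with (i). For (ii), the finite infima of a set G, shifted by
  the infimum of G, form a net decreasing to 0. For (iv) \<Longrightarrow> (i), a positive lower bound p of
  T(D) is disjoint from T(H): the net d \<sqinter> |h| decreases to 0 inside the ideal H, so its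
  image order converges to 0; since T d lies in the band generated by T(H), p = 0. For
  (v) \<Longrightarrow> (i), a decreasing net with infimum 0 order converges and hence uo-converges.
  For (i) \<Longrightarrow> (v), fix e \<ge> 0. The net |Tx - Tf| \<sqinter> e is eventually dominated by every
  T k + pprt (e - T g) with k an eventual bound of |x - f| \<sqinter> g, and always by every e - w with
  w \<ge> 0 disjoint from T(F). A common lower bound of these is disjoint from T(F) by the
  Archimedean property; then all its multiples are admissible as w, so it vanishes, again
  by the Archimedean property.\<close>

text \<open>Order convergence witnesses can be empty only in the zero space, which is therefore
  split off where a witness has to be nonempty.\<close>

lemma trivial_if_is_inf_empty: "is_inf {} (0::'a::ordered_ab_group_add) \<Longrightarrow> (x::'a) = 0"
proof -
  assume "is_inf {} (0::'a)"
  then have "x \<le> 0" "- x \<le> 0" unfolding is_inf_on_def by blast+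
  then show "x = 0" by simp
qed

lemma is_inf_zero_nonneg: "is_inf G (0::'a::{order,zero}) \<Longrightarrow> g \<in> G \<Longrightarrow> 0 \<le> g"
  unfolding is_inf_on_def by blast

lemma is_sup_iff_is_inf_uminus:
  "is_sup G g \<longleftrightarrow> is_inf (uminus ` G) (- (g::'a::ordered_ab_group_add))"
  unfolding is_inf_on_def is_sup_on_def
  by (auto simp: minus_le_iff le_minus_iff) (metis le_minus_iff, metis neg_le_iff_le)

lemma down_directed_image_inf:
  assumes "down_directed (D::'a::lattice set)"
  shows "down_directed ((\<lambda>d. inf d c) ` D)"
  unfolding down_directed_def
proof (intro ballI)
  fix u v assume "u \<in> (\<lambda>d. inf d c) ` D" "v \<in> (\<lambda>d. inf d c) ` D"
  then obtain a b where "a \<in> D" "b \<in> D" "u = inf a c" "v = inf b c" by blast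
  moreover obtain d where "d \<in> D" "d \<le> a" "d \<le> b"
    using assms \<open>a \<in> D\<close> \<open>b \<in> D\<close> unfolding down_directed_def by blast
  ultimately show "\<exists>z\<in>(\<lambda>d. inf d c) ` D. z \<le> u \<and> z \<le> v"
    by (intro bexI[of _ "inf d c"]) (auto intro: le_infI1)
qed

lemma pprt_eq_half: "pprt x = (1/2) *\<^sub>R (x + \<bar>x\<bar>)" for x :: "'a::vector_lattice"
proof -
  have "x + \<bar>x\<bar> = 2 *\<^sub>R pprt x"
    unfolding scaleR_2 using prts[of x] abs_prts[of x]
    by (metis add.commute add.left_commute diff_add_cancel)
  then show ?thesis by simp
qed

lemma sup_eq_add_pprt_diff: "sup x y = x + pprt (y - x)" for x :: "'a::lattice_ab_group_add"
  unfolding pprt_def by (simp add: add_sup_distrib_left sup_commute)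

lemma inf_pprt_uminus_nprt: "inf (pprt x) (- nprt x) = 0" for x :: "'a::lattice_ab_group_add"
proof -
  have "pprt x = x + - nprt x"
    using prts[of x] by (metis add_diff_cancel diff_conv_add_uminus)
  then have "inf (pprt x) (- nprt x) = inf x 0 + - nprt x"
    by (simp only: add_inf_distrib_right add_0_left)
  also have "\<dots> = 0"
    by (simp only: nprt_def[symmetric] add.right_inverse)
  finally show ?thesis .
qed

lemma inf_le_inf_add_pprt_diff:
  "inf a c \<le> inf a b + pprt (c - b)" for a :: "'a::lattice_ab_group_add"
proof -
  have "c - b \<le> pprt (c - b)" by (simp add: pprt_def)
  then have "inf a c \<le> inf (a + pprt (c - b)) (b + pprt (c - b))"
    by (intro inf_mono) (simp_all add: diff_le_eq add.commute)
  then show ?thesis by (simp only: add_inf_distrib_right)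
qed

lemma add_le_if_disjoint:
  fixes x w e :: "'a::lattice_ab_group_add"
  assumes "inf x w = 0" "x \<le> e" "w \<le> e"
  shows "x + w \<le> e"
  using add_eq_inf_sup[of x w] assms by simp

lemma le_if_disjoint_le_add:
  fixes x m e :: "'a::lattice_ab_group_add"
  assumes "0 \<le> x" "0 \<le> m" "0 \<le> e" "inf x m = 0" "x \<le> e + m"
  shows "x \<le> e"
proof -
  have "x - e \<le> x" "x - e \<le> m"
    using assms by (simp_all add: diff_le_eq add.commute)
  then have "pprt (x - e) \<le> inf x m"
    unfolding pprt_def using assms by (intro le_infI sup_least) auto
  then have "x - e \<le> 0"
    using assms(4) by (simp add: pprt_def)
  then show ?thesis by simp
qed

lemma scaleR_inf_distrib:
  fixes x y :: "'a::vector_lattice"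
  assumes "0 \<le> c"
  shows "c *\<^sub>R inf x y = inf (c *\<^sub>R x) (c *\<^sub>R y)"
proof (cases "c = 0")
  case False
  with assms have "0 < c" by simp
  define M where "M = inf (c *\<^sub>R x) (c *\<^sub>R y)"
  have "(1/c) *\<^sub>R M \<le> (1/c) *\<^sub>R (c *\<^sub>R z)" if "z = x \<or> z = y" for z
    using \<open>0 < c\<close> that unfolding M_def by (intro scaleR_left_mono) auto
  then have "(1/c) *\<^sub>R M \<le> inf x y"
    using \<open>0 < c\<close> by simp
  then have "c *\<^sub>R ((1/c) *\<^sub>R M) \<le> c *\<^sub>R inf x y"
    using assms by (rule scaleR_left_mono)
  moreover have "c *\<^sub>R inf x y \<le> M"
    unfolding M_def using assms by (simp add: scaleR_left_mono)
  ultimately show ?thesis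
    using \<open>0 < c\<close> unfolding M_def by simp
qed simp

lemma inf_scaleR_left_eq_0:
  fixes p b :: "'a::vector_lattice"
  assumes "0 \<le> p" "0 \<le> b" "inf p b = 0" "0 \<le> c"
  shows "inf (c *\<^sub>R p) b = 0"
proof (rule order_antisym)
  have "c *\<^sub>R p \<le> (c + 1) *\<^sub>R p" "1 *\<^sub>R b \<le> (c + 1) *\<^sub>R b"
    using assms by (intro scaleR_right_mono; simp)+
  then have "inf (c *\<^sub>R p) b \<le> inf ((c + 1) *\<^sub>R p) ((c + 1) *\<^sub>R b)"
    by (intro inf_mono) simp_all
  also have "\<dots> = 0"
    using assms by (simp add: scaleR_inf_distrib[symmetric])
  finally show "inf (c *\<^sub>R p) b \<le> 0" .
  show "0 \<le> inf (c *\<^sub>R p) b" using assms by (simp add: scaleR_nonneg_nonneg)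
qed

lemma directed_finite_infima:
  fixes G :: "'a::lattice_ab_group_add set"
  assumes "G \<noteq> {}" "is_inf G g"
  defines "D \<equiv> {Inf_fin S - g | S. finite S \<and> S \<noteq> {} \<and> S \<subseteq> G}"
  shows "D \<noteq> {}" "down_directed D" "is_inf D 0"
proof -
  have singleton: "s - g \<in> D" if "s \<in> G" for s
    unfolding D_def using that by (intro CollectI exI[of _ "{s}"]) auto
  then show "D \<noteq> {}" using assms(1) by blast
  show "down_directed D"
    unfolding down_directed_def
  proof (intro ballI)
    fix a b assume "a \<in> D" "b \<in> D"
    then obtain S1 S2 where S: "a = Inf_fin S1 - g" "b = Inf_fin S2 - g"
      "finite S1" "finite S2" "S1 \<noteq> {}" "S2 \<noteq> {}" "S1 \<subseteq> G" "S2 \<subseteq> G"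
      unfolding D_def by blast
    then have "Inf_fin (S1 \<union> S2) - g \<in> D"
      unfolding D_def by (intro CollectI exI[of _ "S1 \<union> S2"]) auto
    moreover have "Inf_fin (S1 \<union> S2) \<le> Inf_fin S1" "Inf_fin (S1 \<union> S2) \<le> Inf_fin S2"
      using S by (auto intro: Inf_fin.subset_imp)
    ultimately show "\<exists>c\<in>D. c \<le> a \<and> c \<le> b"
      using S(1,2) by (intro bexI) (auto intro: diff_right_mono)
  qed
  show "is_inf D 0"
    unfolding is_inf_on_def
  proof (intro conjI ballI allI impI)
    fix d assume "d \<in> D"
    then obtain S where "d = Inf_fin S - g" "finite S" "S \<noteq> {}" "S \<subseteq> G"
      unfolding D_def by blast
    moreover have "g \<le> Inf_fin S"
      using calculation assms(2) unfolding is_inf_on_def by (intro Inf_fin.boundedI) auto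
    ultimately show "0 \<le> d" by simp
  next
    fix y assume "\<forall>d\<in>D. y \<le> d"
    then have "y + g \<le> s" if "s \<in> G" for s
      using singleton[OF that] by (fastforce simp: le_diff_eq)
    then have "y + g \<le> g"
      using assms(2) unfolding is_inf_on_def by blast
    then show "y \<le> 0" by simp
  qed simp
qed

lemma inf_le_diff_if_disjoint:
  fixes a w e :: "'a::lattice_ab_group_add"
  assumes "0 \<le> a" "0 \<le> w" "0 \<le> e" "w \<le> e" "inf w a = 0"
  shows "inf a e \<le> e - w"
proof -
  have "inf (inf a e) w \<le> inf a w"
    by (rule inf_mono) simp_all
  also have "inf a w = 0"
    using assms(5) by (simp add: inf_commute)
  finally have "inf (inf a e) w = 0"
    using assms(1-3) by (simp add: order_antisym)
  then have "inf a e + w \<le> e"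
    using inf_le2 assms(4) by (rule add_le_if_disjoint)
  then show ?thesis
    by (simp add: le_diff_eq)
qed

definition tail_filter :: "'a::order set \<Rightarrow> 'a filter" where
  "tail_filter D = (INF a\<in>D. principal {x\<in>D. x \<le> a})"

lemma eventually_tail_filter:
  assumes "D \<noteq> {}" "down_directed D"
  shows "eventually P (tail_filter D) \<longleftrightarrow> (\<exists>a\<in>D. \<forall>x\<in>D. x \<le> a \<longrightarrow> P x)"
proof -
  have "eventually P (tail_filter D) \<longleftrightarrow> (\<exists>a\<in>D. eventually P (principal {x\<in>D. x \<le> a}))"
    unfolding tail_filter_def
  proof (rule eventually_INF_base[OF assms(1)])
    fix a b assume "a \<in> D" "b \<in> D"
    then obtain c where "c \<in> D" "c \<le> a" "c \<le> b"
      using assms(2) unfolding down_directed_def by blast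
    then show "\<exists>c\<in>D. principal {x\<in>D. x \<le> c} \<le> inf (principal {x\<in>D. x \<le> a}) (principal {x\<in>D. x \<le> b})"
      by (intro bexI[of _ c]) auto
  qed
  then show ?thesis by (auto simp: eventually_principal)
qed

lemma tail_filter_neq_bot: "D \<noteq> {} \<Longrightarrow> down_directed D \<Longrightarrow> tail_filter D \<noteq> bot"
  using eventually_tail_filter[of D "\<lambda>_. False"] by (auto simp: trivial_limit_def)

lemma eventually_in_tail_filter: "D \<noteq> {} \<Longrightarrow> down_directed D \<Longrightarrow> \<forall>\<^sub>F x in tail_filter D. x \<in> D"
  by (auto simp: eventually_tail_filter)

lemma oconv_on_tail_filter:
  assumes "D \<noteq> {}" "down_directed D" "D \<subseteq> A" "is_inf_on A D 0"
  shows "oconv_on A (tail_filter D) 0"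
  unfolding oconv_on_def
proof (intro exI[of _ D] conjI ballI)
  fix g assume "g \<in> D"
  have "0 \<le> x" if "x \<in> D" for x
    using assms(4) that unfolding is_inf_on_def by blast
  with \<open>g \<in> D\<close> show "\<forall>\<^sub>F x in tail_filter D. \<bar>x - 0\<bar> \<le> g"
    by (auto simp: eventually_tail_filter[OF assms(1,2)])
qed (use assms in auto)

lemma oconv_imp_uoconv: "oconv F f \<Longrightarrow> uoconv F f"
  unfolding uoconv_def oconv_on_def eventually_filtermap
  by (fastforce elim!: eventually_mono intro: le_infI1)

lemma oconv_if_eventually_eq: "\<forall>\<^sub>F x in F. x = f \<Longrightarrow> oconv F f"
  unfolding oconv_on_def is_inf_on_def by (intro exI[of _ "{0}"]) (auto elim: eventually_mono)

lemma oconv_0_lower_bound: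
  assumes "F \<noteq> bot" "oconv F 0" "\<forall>\<^sub>F x in F. w \<le> \<bar>x\<bar>"
  shows "w \<le> 0"
proof -
  obtain G where G: "is_inf G 0" "\<forall>g\<in>G. \<forall>\<^sub>F x in F. \<bar>x - 0\<bar> \<le> g"
    using assms(2) unfolding oconv_on_def by blast
  have "w \<le> g" if "g \<in> G" for g
  proof -
    have "\<forall>\<^sub>F x in F. \<bar>x\<bar> \<le> g" using G(2) that by simp
    with assms(3) have "\<forall>\<^sub>F x in F. w \<le> g"
      by (rule eventually_elim2) (rule order_trans)
    then show ?thesis using assms(1) by simp
  qed
  then show ?thesis using G(1) unfolding is_inf_on_def by blast
qed

lemma uoconv_iff:
  "uoconv F f \<longleftrightarrow> (\<forall>g\<ge>0. \<exists>G. is_inf G 0 \<and> (\<forall>k\<in>G. \<forall>\<^sub>F x in F. inf \<bar>x - f\<bar> g \<le> k))"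
  unfolding uoconv_def oconv_on_def eventually_filtermap by simp

lemma ideal_inf_abs_subset:
  assumes "vl_ideal H" "h \<in> H" "is_inf D 0"
  shows "(\<lambda>d. inf d \<bar>h\<bar>) ` D \<subseteq> H"
proof
  fix x assume "x \<in> (\<lambda>d. inf d \<bar>h\<bar>) ` D"
  then have "\<bar>x\<bar> \<le> \<bar>h\<bar>"
    using assms(3) by (auto dest: is_inf_zero_nonneg)
  then show "x \<in> H"
    using assms(1,2) unfolding vl_ideal_def by blast
qed

lemma is_inf_on_ideal_inf_abs:
  assumes "vl_ideal H" "h \<in> H" "is_inf D 0"
  shows "is_inf_on H ((\<lambda>d. inf d \<bar>h\<bar>) ` D) 0"
  unfolding is_inf_on_def
proof (intro conjI ballI allI impI)
  show "0 \<in> H"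
    using assms(1) unfolding vl_ideal_def by blast
  fix y assume "\<forall>x\<in>(\<lambda>d. inf d \<bar>h\<bar>) ` D. y \<le> x"
  then have "\<forall>d\<in>D. y \<le> d" by auto
  then show "y \<le> 0"
    using assms(3) unfolding is_inf_on_def by blast
qed (use assms(3) in \<open>auto dest: is_inf_zero_nonneg\<close>)

lemma subset_disj_compl_disj_compl: "A \<subseteq> disj_compl (disj_compl A)"
  by (auto simp: disj_compl_def inf_commute)

definition preserves_directed_inf_zero :: "('a::{order,zero} \<Rightarrow> 'b::{order,zero}) \<Rightarrow> bool" where
  "preserves_directed_inf_zero T \<longleftrightarrow>
     (\<forall>D. D \<noteq> {} \<and> down_directed D \<and> is_inf D 0 \<longrightarrow> is_inf (T ` D) 0)"

lemma preserves_directed_inf_zeroD: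
  "preserves_directed_inf_zero T \<Longrightarrow> D \<noteq> {} \<Longrightarrow> down_directed D \<Longrightarrow> is_inf D 0 \<Longrightarrow> is_inf (T ` D) 0"
  unfolding preserves_directed_inf_zero_def by blast

context
  fixes T :: "'a::vector_lattice \<Rightarrow> 'b::vector_lattice"
  assumes hom: "lattice_hom T"
begin

lemma lattice_hom_linear: "linear T"
  using hom unfolding lattice_hom_def by simp

interpretation T: linear T
  by (rule lattice_hom_linear)

lemma lattice_hom_abs: "T \<bar>x\<bar> = \<bar>T x\<bar>"
  using hom unfolding lattice_hom_def by simp

lemma lattice_hom_abs_diff: "\<bar>T x - T y\<bar> = T \<bar>x - y\<bar>"
  by (simp add: lattice_hom_abs T.diff)

lemma lattice_hom_nonneg: "0 \<le> x \<Longrightarrow> 0 \<le> T x"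
  by (metis abs_ge_zero abs_of_nonneg lattice_hom_abs)

lemma lattice_hom_mono: "x \<le> y \<Longrightarrow> T x \<le> T y"
  using lattice_hom_nonneg[of "y - x"] by (simp add: T.diff)

lemma lattice_hom_pprt: "T (pprt x) = pprt (T x)"
  by (simp only: pprt_eq_half T.scale T.add lattice_hom_abs)

lemma lattice_hom_sup: "T (sup x y) = sup (T x) (T y)"
  by (simp only: sup_eq_add_pprt_diff T.add T.diff lattice_hom_pprt)

lemma lattice_hom_inf: "T (inf x y) = inf (T x) (T y)"
  by (simp only: inf_eq_neg_sup T.neg lattice_hom_sup)

lemma lattice_hom_Inf_fin: "finite S \<Longrightarrow> S \<noteq> {} \<Longrightarrow> T (Inf_fin S) = Inf_fin (T ` S)"
  by (induction S rule: finite_ne_induct) (simp_all add: lattice_hom_inf)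

lemma lattice_hom_inf_abs_diff_le:
  assumes "inf \<bar>x - f\<bar> g \<le> k"
  shows "inf \<bar>T x - T f\<bar> e \<le> T k + pprt (e - T g)"
proof -
  have "inf \<bar>T x - T f\<bar> (T g) \<le> T k"
    using lattice_hom_mono[OF assms] by (simp add: lattice_hom_inf lattice_hom_abs_diff)
  then show ?thesis
    using inf_le_inf_add_pprt_diff[of "\<bar>T x - T f\<bar>" e "T g"]
    by (simp add: add_right_mono order_trans)
qed

lemma preserves_directed_inf_zeroI:
  assumes "\<And>D p. D \<noteq> {} \<Longrightarrow> down_directed D \<Longrightarrow> is_inf D 0 \<Longrightarrow> 0 \<le> p \<Longrightarrow> \<forall>d\<in>D. p \<le> T d \<Longrightarrow> p \<le> 0"
  shows "preserves_directed_inf_zero T"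
  unfolding preserves_directed_inf_zero_def
proof (intro allI impI, elim conjE)
  fix D :: "'a set" assume D: "D \<noteq> {}" "down_directed D" "is_inf D 0"
  have D_nonneg: "0 \<le> T d" if "d \<in> D" for d
    using D(3) that by (intro lattice_hom_nonneg is_inf_zero_nonneg)
  show "is_inf (T ` D) 0"
    unfolding is_inf_on_def
  proof (intro conjI ballI allI impI)
    show "0 \<le> t" if "t \<in> T ` D" for t
      using that D_nonneg by blast
    fix z assume "\<forall>t\<in>T ` D. z \<le> t"
    then have "pprt z \<le> 0"
      using D D_nonneg by (intro assms) (auto simp: pprt_def)
    then show "z \<le> 0" by (simp add: pprt_def)
  qed simp
qed

lemma preserves_inf:
  assumes P: "preserves_directed_inf_zero T" and "G \<noteq> {}" "is_inf G g"
  shows "is_inf (T ` G) (T g)"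
proof -
  let ?D = "{Inf_fin S - g | S. finite S \<and> S \<noteq> {} \<and> S \<subseteq> G}"
  have TD: "is_inf (T ` ?D) 0"
    using P directed_finite_infima[OF assms(2,3)] by (rule preserves_directed_inf_zeroD)
  show ?thesis
    unfolding is_inf_on_def
  proof (intro conjI ballI allI impI)
    fix t assume "t \<in> T ` G"
    then show "T g \<le> t"
      using assms(3) unfolding is_inf_on_def by (auto intro: lattice_hom_mono)
  next
    fix z assume z: "\<forall>t\<in>T ` G. z \<le> t"
    have "z - T g \<le> T d" if "d \<in> ?D" for d
    proof -
      obtain S where S: "d = Inf_fin S - g" "finite S" "S \<noteq> {}" "S \<subseteq> G"
        using \<open>d \<in> ?D\<close> by blast
      have "z \<le> Inf_fin (T ` S)"
        using z S by (intro Inf_fin.boundedI) auto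
      also have "Inf_fin (T ` S) = T (Inf_fin S)"
        using S by (simp add: lattice_hom_Inf_fin)
      finally show ?thesis
        using S(1) by (simp add: T.diff le_diff_eq)
    qed
    then have "z - T g \<le> 0"
      using TD unfolding is_inf_on_def by blast
    then show "z \<le> T g" by simp
  qed simp
qed

lemma preserves_sup:
  assumes P: "preserves_directed_inf_zero T" and "G \<noteq> {}" "is_sup G g"
  shows "is_sup (T ` G) (T g)"
proof -
  have "is_inf (T ` uminus ` G) (T (- g))"
    using assms by (intro preserves_inf) (simp_all add: is_sup_iff_is_inf_uminus)
  moreover have "T ` uminus ` G = uminus ` T ` G"
    by (auto simp: image_image T.neg)
  ultimately show ?thesis
    by (simp add: is_sup_iff_is_inf_uminus T.neg)
qed

lemma order_continuous_if_preserves_directed_inf_zero: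
  assumes P: "preserves_directed_inf_zero T"
  shows "order_continuous T"
  unfolding order_continuous_on_def
proof (intro allI impI, elim conjE)
  fix F :: "'a filter" and f assume "oconv F f"
  then obtain G where G: "is_inf G 0" "\<forall>g\<in>G. \<forall>\<^sub>F x in F. \<bar>x - f\<bar> \<le> g"
    unfolding oconv_on_def by blast
  show "oconv (filtermap T F) (T f)"
  proof (cases "G = {}")
    case True
    with G(1) have trivial: "x = 0" for x :: 'a
      by (simp add: trivial_if_is_inf_empty)
    then have "T x = T f" for x
      by (simp only: trivial[of x] trivial[of f])
    then show ?thesis
      by (intro oconv_if_eventually_eq) (simp add: eventually_filtermap)
  next
    case False
    have "is_inf (T ` G) 0"
      using preserves_inf[OF P False G(1)] by simp
    moreover have "\<forall>t\<in>T ` G. \<forall>\<^sub>F y in filtermap T F. \<bar>y - T f\<bar> \<le> t"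
      using G(2) by (auto simp: eventually_filtermap lattice_hom_abs_diff
          elim!: eventually_mono intro: lattice_hom_mono)
    ultimately show ?thesis
      unfolding oconv_on_def by blast
  qed
qed

lemma le_if_le_image_eventual_bounds:
  assumes P: "preserves_directed_inf_zero T"
    and nontrivial: "\<exists>x::'a. x \<noteq> 0" and "uoconv F f" "0 \<le> g"
    and bound: "\<And>k. 0 \<le> k \<Longrightarrow> \<forall>\<^sub>F x in F. inf \<bar>x - f\<bar> g \<le> k \<Longrightarrow> z \<le> T k + c"
  shows "z \<le> c"
proof -
  obtain G where G: "is_inf G 0" "\<forall>k\<in>G. \<forall>\<^sub>F x in F. inf \<bar>x - f\<bar> g \<le> k"
    using \<open>uoconv F f\<close> \<open>0 \<le> g\<close> unfolding uoconv_iff by blast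
  have "G \<noteq> {}"
    using G(1) nontrivial trivial_if_is_inf_empty by blast
  then have "is_inf (T ` G) 0"
    using preserves_inf[OF P _ G(1)] by simp
  moreover have "z - c \<le> T k" if "k \<in> G" for k
    using bound[OF is_inf_zero_nonneg[OF G(1) that]] G(2) that by (simp add: diff_le_eq)
  ultimately have "z - c \<le> 0"
    unfolding is_inf_on_def by blast
  then show ?thesis
    by simp
qed

lemma disjoint_image_ideal_if_below_image:
  assumes H: "vl_ideal H" "order_continuous_on H T"
    and D: "D \<noteq> {}" "down_directed D" "is_inf D 0"
    and p: "0 \<le> p" "\<forall>d\<in>D. p \<le> T d"
    and "h \<in> H"
  shows "inf p \<bar>T h\<bar> = 0"
proof -
  define Dh where "Dh = (\<lambda>d. inf d \<bar>h\<bar>) ` D"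
  have "Dh \<noteq> {}" "down_directed Dh"
    using D(1,2) by (simp_all add: Dh_def down_directed_image_inf)
  then have bot: "tail_filter Dh \<noteq> bot" and in_Dh: "\<forall>\<^sub>F x in tail_filter Dh. x \<in> Dh"
    by (rule tail_filter_neq_bot, rule eventually_in_tail_filter)
  have "Dh \<subseteq> H" "is_inf_on H Dh 0"
    unfolding Dh_def using H(1) \<open>h \<in> H\<close> D(3)
    by (rule ideal_inf_abs_subset, rule is_inf_on_ideal_inf_abs)
  with \<open>Dh \<noteq> {}\<close> \<open>down_directed Dh\<close> have "oconv_on H (tail_filter Dh) 0"
    by (intro oconv_on_tail_filter)
  moreover have "\<forall>\<^sub>F x in tail_filter Dh. x \<in> H" "0 \<in> H"
    using in_Dh \<open>Dh \<subseteq> H\<close> H(1) by (auto elim: eventually_mono simp: vl_ideal_def)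
  ultimately have "oconv (filtermap T (tail_filter Dh)) 0"
    using H(2) bot unfolding order_continuous_on_def T.zero[symmetric] by blast
  moreover have "inf p \<bar>T h\<bar> \<le> \<bar>T x\<bar>" if "x \<in> Dh" for x
  proof -
    obtain d where "d \<in> D" "x = inf d \<bar>h\<bar>"
      using \<open>x \<in> Dh\<close> unfolding Dh_def by blast
    then have "inf p \<bar>T h\<bar> \<le> T x"
      using p(2) by (auto simp: lattice_hom_inf lattice_hom_abs intro: le_infI1)
    then show ?thesis
      using abs_ge_self order_trans by blast
  qed
  then have "\<forall>\<^sub>F y in filtermap T (tail_filter Dh). inf p \<bar>T h\<bar> \<le> \<bar>y\<bar>"
    using in_Dh by (auto simp: eventually_filtermap elim!: eventually_mono)
  ultimately have "inf p \<bar>T h\<bar> \<le> 0"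
    using bot by (intro oconv_0_lower_bound) (simp_all add: filtermap_bot_iff)
  then show ?thesis
    using p(1) by (simp add: order_antisym)
qed

lemma preserves_directed_inf_zero_if_order_continuous_on_ideal:
  assumes "vl_ideal H" "order_continuous_on H T"
    and band: "range T \<subseteq> disj_compl (disj_compl (T ` H))"
  shows "preserves_directed_inf_zero T"
proof (rule preserves_directed_inf_zeroI)
  fix D p assume D: "D \<noteq> {}" "down_directed D" "is_inf D 0" and p: "0 \<le> p" "\<forall>d\<in>D. p \<le> T d"
  obtain d where "d \<in> D" using D(1) by blast
  have "p \<in> disj_compl (T ` H)"
    using disjoint_image_ideal_if_below_image[OF assms(1,2) D p] p(1)
    by (auto simp: disj_compl_def)
  moreover have "T d \<in> disj_compl (disj_compl (T ` H))"
    using band by auto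
  ultimately have "inf \<bar>T d\<bar> \<bar>p\<bar> = 0"
    unfolding disj_compl_def by blast
  moreover have "p \<le> \<bar>T d\<bar>"
    using p(2) \<open>d \<in> D\<close> abs_ge_self order_trans by blast
  ultimately show "p \<le> 0"
    using p(1) by (simp add: inf_absorb2)
qed

lemma preserves_directed_inf_zero_if_uo_continuous:
  assumes "uo_continuous T"
  shows "preserves_directed_inf_zero T"
proof (rule preserves_directed_inf_zeroI)
  fix D p assume D: "D \<noteq> {}" "down_directed D" "is_inf D 0" and p: "0 \<le> p" "\<forall>d\<in>D. p \<le> T d"
  then have bot: "tail_filter D \<noteq> bot" and in_D: "\<forall>\<^sub>F x in tail_filter D. x \<in> D"
    by (simp_all add: tail_filter_neq_bot eventually_in_tail_filter)
  have "uoconv (tail_filter D) 0"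
    using D by (intro oconv_imp_uoconv oconv_on_tail_filter) auto
  then have "uoconv (filtermap T (tail_filter D)) 0"
    using assms bot unfolding uo_continuous_def T.zero[symmetric] by blast
  then have "oconv (filtermap (\<lambda>y. inf \<bar>y\<bar> p) (filtermap T (tail_filter D))) 0"
    using p(1) unfolding uoconv_def by simp
  moreover have "p \<le> \<bar>T x\<bar>" if "x \<in> D" for x
    using p(2) that abs_ge_self order_trans by blast
  then have "\<forall>\<^sub>F y in filtermap (\<lambda>y. inf \<bar>y\<bar> p) (filtermap T (tail_filter D)). p \<le> \<bar>y\<bar>"
    using in_D p(1) by (auto simp: eventually_filtermap elim!: eventually_mono)
  ultimately show "p \<le> 0"
    using bot by (intro oconv_0_lower_bound) (simp_all add: filtermap_bot_iff)
qed

end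

lemma inf_eq_0_if_le_pprt_diff_multiples:
  fixes p t e :: "'a::archimedean_vector_lattice"
  assumes "0 \<le> p" "0 \<le> t" "0 \<le> e" and le: "\<And>n. p \<le> pprt (e - real n *\<^sub>R t)"
  shows "inf p t = 0"
proof -
  define a where "a = inf p t"
  have "0 \<le> a" "a \<le> t"
    using assms(1,2) unfolding a_def by simp_all
  have "real (Suc n) *\<^sub>R a \<le> e" for n
  proof -
    define u where "u = e - real n *\<^sub>R t"
    have "a \<le> pprt u"
      unfolding a_def u_def using le by (rule le_infI1)
    then have "inf a (- nprt u) \<le> inf (pprt u) (- nprt u)"
      by (rule inf_mono) simp
    then have disjoint: "inf a (- nprt u) = 0"
      using \<open>0 \<le> a\<close> by (simp add: inf_pprt_uminus_nprt order_antisym)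
    have "real (Suc n) *\<^sub>R a = real n *\<^sub>R a + a"
      by (simp add: scaleR_left_distrib)
    also have "\<dots> \<le> real n *\<^sub>R t + pprt u"
      by (rule add_mono[OF scaleR_left_mono[OF \<open>a \<le> t\<close>] \<open>a \<le> pprt u\<close>]) simp
    also have "pprt u = u + - nprt u"
      using prts[of u] by (metis add_diff_cancel diff_conv_add_uminus)
    also have "real n *\<^sub>R t + (u + - nprt u) = e + - nprt u"
      unfolding u_def by (simp add: algebra_simps)
    finally have le: "real (Suc n) *\<^sub>R a \<le> e + - nprt u" .
    have "0 \<le> - nprt u"
      by simp
    moreover have "inf (real (Suc n) *\<^sub>R a) (- nprt u) = 0"
      by (rule inf_scaleR_left_eq_0[OF \<open>0 \<le> a\<close> \<open>0 \<le> - nprt u\<close> disjoint]) simp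
    moreover have "0 \<le> real (Suc n) *\<^sub>R a"
      using \<open>0 \<le> a\<close> by (intro scaleR_nonneg_nonneg) simp_all
    ultimately show ?thesis
      using le_if_disjoint_le_add[OF _ _ assms(3) _ le] by blast
  qed
  then have "real n *\<^sub>R a \<le> e" for n
    using assms(3) by (cases n) simp_all
  then show ?thesis
    using archimedean[OF \<open>0 \<le> a\<close>] unfolding a_def by blast
qed

lemma le_0_if_bounded_on_cone_and_disjoint_complement:
  fixes z e :: "'a::archimedean_vector_lattice"
  assumes "0 \<le> e"
    and S_nonneg: "\<And>t. t \<in> S \<Longrightarrow> 0 \<le> t"
    and S_cone: "\<And>t c. t \<in> S \<Longrightarrow> 0 \<le> c \<Longrightarrow> c *\<^sub>R t \<in> S"
    and cone_bound: "\<And>t. t \<in> S \<Longrightarrow> z \<le> pprt (e - t)"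
    and complement_bound: "\<And>w. 0 \<le> w \<Longrightarrow> w \<le> e \<Longrightarrow> \<forall>t\<in>S. inf w t = 0 \<Longrightarrow> z \<le> e - w"
  shows "z \<le> 0"
proof -
  define p where "p = pprt z"
  have "0 \<le> p"
    unfolding p_def by simp
  have disjoint: "inf p t = 0" if "t \<in> S" for t
  proof (rule inf_eq_0_if_le_pprt_diff_multiples[OF \<open>0 \<le> p\<close> S_nonneg[OF that] \<open>0 \<le> e\<close>])
    fix n
    have "z \<le> pprt (e - real n *\<^sub>R t)"
      by (rule cone_bound[OF S_cone[OF that]]) simp
    then have "pprt z \<le> pprt (pprt (e - real n *\<^sub>R t))"
      by (rule pprt_mono)
    then show "p \<le> pprt (e - real n *\<^sub>R t)"
      unfolding p_def by simp
  qed
  have "real n *\<^sub>R p \<le> e" for n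
  proof (induction n)
    case (Suc n)
    have "0 \<le> real n *\<^sub>R p"
      using \<open>0 \<le> p\<close> by (intro scaleR_nonneg_nonneg) simp_all
    moreover have "\<forall>t\<in>S. inf (real n *\<^sub>R p) t = 0"
    proof
      fix t assume "t \<in> S"
      show "inf (real n *\<^sub>R p) t = 0"
        by (rule inf_scaleR_left_eq_0[OF \<open>0 \<le> p\<close> S_nonneg[OF \<open>t \<in> S\<close>] disjoint[OF \<open>t \<in> S\<close>]]) simp
    qed
    ultimately have "z \<le> e - real n *\<^sub>R p"
      using Suc.IH by (intro complement_bound)
    moreover have "0 \<le> e - real n *\<^sub>R p"
      using Suc.IH by simp
    ultimately have "p \<le> e - real n *\<^sub>R p"
      unfolding p_def pprt_def by (rule sup_least)
    then show ?case
      by (simp add: scaleR_left_distrib le_diff_eq)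
  qed (use \<open>0 \<le> e\<close> in simp)
  then have "p = 0"
    using archimedean[OF \<open>0 \<le> p\<close>] by blast
  then show ?thesis
    using sup_ge1[of z 0] unfolding p_def pprt_def by simp
qed

lemma uoconv_image_dominated:
  fixes T :: "'a::vector_lattice \<Rightarrow> 'b::archimedean_vector_lattice"
  assumes hom: "lattice_hom T" and P: "preserves_directed_inf_zero T"
    and nontrivial: "\<exists>x::'a. x \<noteq> 0" and "uoconv F f" and "0 \<le> e"
  shows "\<exists>U. is_inf U 0 \<and> (\<forall>u\<in>U. \<forall>\<^sub>F x in F. inf \<bar>T x - T f\<bar> e \<le> u)"
proof -
  define S where "S = T ` {h. 0 \<le> h}"
  define A where "A = {T k + pprt (e - T g) | g k. 0 \<le> g \<and> 0 \<le> k \<and> (\<forall>\<^sub>F x in F. inf \<bar>x - f\<bar> g \<le> k)}"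
  define B where "B = {e - w | w. 0 \<le> w \<and> w \<le> e \<and> (\<forall>t\<in>S. inf w t = 0)}"
  have "\<forall>\<^sub>F x in F. inf \<bar>T x - T f\<bar> e \<le> u" if "u \<in> A" for u
    using that unfolding A_def
    by (auto elim!: eventually_mono intro: lattice_hom_inf_abs_diff_le[OF hom])
  moreover have "\<forall>\<^sub>F x in F. inf \<bar>T x - T f\<bar> e \<le> u" if "u \<in> B" for u
  proof (intro always_eventually allI)
    fix x
    have "\<bar>T x - T f\<bar> \<in> S"
      unfolding S_def lattice_hom_abs_diff[OF hom] by simp
    then show "inf \<bar>T x - T f\<bar> e \<le> u"
      using \<open>u \<in> B\<close> \<open>0 \<le> e\<close> unfolding B_def by (auto intro: inf_le_diff_if_disjoint)
  qed
  moreover have "is_inf (A \<union> B) 0"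
    unfolding is_inf_on_def
  proof (intro conjI ballI allI impI)
    fix u assume "u \<in> A \<union> B"
    then show "0 \<le> u"
      unfolding A_def B_def using \<open>0 \<le> e\<close>
      by (auto intro!: add_nonneg_nonneg lattice_hom_nonneg[OF hom])
  next
    fix z assume z: "\<forall>u\<in>A \<union> B. z \<le> u"
    show "z \<le> 0"
    proof (rule le_0_if_bounded_on_cone_and_disjoint_complement[OF \<open>0 \<le> e\<close>])
      show "0 \<le> t" if "t \<in> S" for t
        using that unfolding S_def by (auto intro: lattice_hom_nonneg[OF hom])
      show "c *\<^sub>R t \<in> S" if "t \<in> S" "0 \<le> c" for t c
        using that unfolding S_def
        by (auto simp: linear_scale[OF lattice_hom_linear[OF hom], symmetric]
            intro!: imageI scaleR_nonneg_nonneg)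
      show "z \<le> e - w" if "0 \<le> w" "w \<le> e" "\<forall>t\<in>S. inf w t = 0" for w
        using that z unfolding B_def by blast
      show "z \<le> pprt (e - t)" if "t \<in> S" for t
      proof -
        obtain g where "0 \<le> g" "t = T g"
          using \<open>t \<in> S\<close> unfolding S_def by blast
        moreover have "z \<le> T k + pprt (e - T g)" if "0 \<le> k" "\<forall>\<^sub>F x in F. inf \<bar>x - f\<bar> g \<le> k" for k
          using z that \<open>0 \<le> g\<close> unfolding A_def by blast
        ultimately show ?thesis
          using le_if_le_image_eventual_bounds[OF hom P nontrivial \<open>uoconv F f\<close>] by blast
      qed
    qed
  qed simp
  ultimately show ?thesis
    by (intro exI[of _ "A \<union> B"]) blast
qed

lemma uo_continuous_if_preserves_directed_inf_zero:
  fixes T :: "'a::vector_lattice \<Rightarrow> 'b::archimedean_vector_lattice"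
  assumes hom: "lattice_hom T" and P: "preserves_directed_inf_zero T"
  shows "uo_continuous T"
  unfolding uo_continuous_def
proof (intro allI impI, elim conjE)
  fix F :: "'a filter" and f assume "uoconv F f"
  show "uoconv (filtermap T F) (T f)"
  proof (cases "\<exists>x::'a. x \<noteq> 0")
    case True
    then show ?thesis
      using uoconv_image_dominated[OF hom P True \<open>uoconv F f\<close>]
      unfolding uoconv_iff eventually_filtermap by blast
  next
    case False
    then have trivial: "x = 0" for x :: 'a
      by simp
    have "T x = T f" for x
      by (simp only: trivial[of x] trivial[of f])
    then show ?thesis
      by (intro oconv_imp_uoconv oconv_if_eventually_eq) (simp add: eventually_filtermap)
  qed
qed

theorem theorem5p2:
  fixes T :: "'f::archimedean_vector_lattice \<Rightarrow> 'e::archimedean_vector_lattice"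
  assumes "lattice_hom T"
  shows
   "((\<forall>D. D \<noteq> {} \<and> down_directed D \<and> is_inf D 0 \<longrightarrow> is_inf (T ` D) 0)
     \<longleftrightarrow> ((\<forall>G g. G \<noteq> {} \<and> is_sup G g \<longrightarrow> is_sup (T ` G) (T g)) \<and>
          (\<forall>G g. G \<noteq> {} \<and> is_inf G g \<longrightarrow> is_inf (T ` G) (T g))))
    \<and> ((\<forall>D. D \<noteq> {} \<and> down_directed D \<and> is_inf D 0 \<longrightarrow> is_inf (T ` D) 0)
     \<longleftrightarrow> order_continuous T)
    \<and> ((\<forall>D. D \<noteq> {} \<and> down_directed D \<and> is_inf D 0 \<longrightarrow> is_inf (T ` D) 0)
     \<longleftrightarrow> (\<exists>H. vl_ideal H \<and> order_continuous_on H T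
              \<and> range T \<subseteq> disj_compl (disj_compl (T ` H))))
    \<and> ((\<forall>D. D \<noteq> {} \<and> down_directed D \<and> is_inf D 0 \<longrightarrow> is_inf (T ` D) 0)
     \<longleftrightarrow> uo_continuous T)"
proof -
  have i_iff: "(\<forall>D. D \<noteq> {} \<and> down_directed D \<and> is_inf D 0 \<longrightarrow> is_inf (T ` D) 0)
      \<longleftrightarrow> preserves_directed_inf_zero T"
    by (simp add: preserves_directed_inf_zero_def)
  have "vl_ideal (UNIV :: 'f set)" "range T \<subseteq> disj_compl (disj_compl (range T))"
    by (simp_all add: vl_ideal_def subset_disj_compl_disj_compl)
  then have oc_iv: "order_continuous T \<Longrightarrow>
      \<exists>H. vl_ideal H \<and> order_continuous_on H T \<and> range T \<subseteq> disj_compl (disj_compl (T ` H))"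
    by blast
  have "T 0 = 0"
    by (rule linear_0[OF lattice_hom_linear[OF assms]])
  then have ii_i: "preserves_directed_inf_zero T"
    if "\<forall>G g. G \<noteq> {} \<and> is_inf G g \<longrightarrow> is_inf (T ` G) (T g)"
    using that unfolding preserves_directed_inf_zero_def by metis
  show ?thesis
    unfolding i_iff
    using ii_i oc_iv preserves_sup[OF assms] preserves_inf[OF assms]
      order_continuous_if_preserves_directed_inf_zero[OF assms]
      preserves_directed_inf_zero_if_order_continuous_on_ideal[OF assms]
      uo_continuous_if_preserves_directed_inf_zero[OF assms]
      preserves_directed_inf_zero_if_uo_continuous[OF assms]
    by (intro conjI iffI) blast+
qed

end
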